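(* Let $H$ be an ideal geometric-value hash function with parameter $\frac{\gamma}{1+\gamma}$, let $\epsilon'>0$ be fixed, and for a set $\mathcal{M}$ run the procedure $\mathtt{DPFM}(\mathcal{M},\epsilon',\gamma,\zeta)$ described in the context, with output $\alpha=\max\{\alpha_p,\alpha_{real},\alpha_{\min}\}$. Let $\hat\alpha=\max\{\alpha_{real},\alpha_p\}$. Then $\mathbb{E}[\alpha]/\mathbb{E}[\hat\alpha]\to 1$ and $\mathrm{Var}[\alpha]/\mathrm{Var}[\hat\alpha]\to 1$ as $|\mathcal{M}|\to\infty$.
   Context: Geometric$(p)$ on $\{1,2,\ldots\}$: $\Pr[Y\le z]=1-(1-p)^z$. An ideal geometric-value hash function $H:\mathcal{X}\times\mathbb{Z}\to\mathbb{N}_+$ with parameter $\frac{\gamma}{1+\gamma}$ ($\gamma>0$): for a key $\zeta$ drawn uniformly, for any distinct inputs $x_1,\ldots,x_t$ the values $H_\zeta(x_1),\ldots,H_\zeta(x_t)$ are i.i.d. Geometric$(\frac{\gamma}{1+\gamma})$. $\mathtt{DPFM}(\mathcal{M},\epsilon',\gamma,\zeta)$ for a finite set $\mathcal{M}$ of distinct ids: set $n_p=\lceil 1/(e^{\epsilon'}-1)\rceil$ and $\alpha_{\min}=\lceil\log_{1+\gamma}\frac{1}{1-e^{-\epsilon'}}\rceil$; let $\alpha_p=\max\{Y_1,\ldots,Y_{n_p}\}$ with $Y_j$ i.i.d. Geometric$(\frac{\gamma}{1+\gamma})$ independent of the hash; let $\alpha_{real}=\max\{H_\zeta(\mathtt{id}):\mathtt{id}\in\mathcal{M}\}$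 with $\zeta$ uniform; output $\alpha=\max\{\alpha_p,\alpha_{real},\alpha_{\min}\}$. *)

theory Defs
  imports "HOL-Probability.Probability"
begin

text \<open>Geometric distribution on {1,2,...}: Pr[Y = k] = (1-p)^(k-1) p, so Pr[Y <= z] = 1-(1-p)^z.\<close>
definition geom1_pmf :: "real \<Rightarrow> nat pmf" where
  "geom1_pmf p = map_pmf Suc (geometric_pmf p)"

definition n_p :: "real \<Rightarrow> nat" where
  "n_p eps = nat \<lceil>1 / (exp eps - 1)\<rceil>"

definition alpha_min :: "real \<Rightarrow> real \<Rightarrow> nat" where
  "alpha_min gam eps = nat \<lceil>log (1 + gam) (1 / (1 - exp (- eps)))\<rceil>"

definition alpha_p_pmf :: "real \<Rightarrow> nat \<Rightarrow> nat pmf" where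
  "alpha_p_pmf p n = map_pmf (\<lambda>f. Max (f ` {..<n})) (Pi_pmf {..<n} 0 (\<lambda>_. geom1_pmf p))"

definition dpfm_space :: "'k measure \<Rightarrow> real \<Rightarrow> real \<Rightarrow> ('k \<times> nat) measure" where
  "dpfm_space K gam eps = K \<Otimes>\<^sub>M measure_pmf (alpha_p_pmf (gam / (1 + gam)) (n_p eps))"

definition alpha_real :: "('k \<Rightarrow> 'x \<Rightarrow> nat) \<Rightarrow> 'x set \<Rightarrow> 'k \<Rightarrow> nat" where
  "alpha_real H Ms \<zeta> = Max ((H \<zeta>) ` Ms)"

definition alpha_hat :: "('k \<Rightarrow> 'x \<Rightarrow> nat) \<Rightarrow> 'x set \<Rightarrow> 'k \<times> nat \<Rightarrow> real" where
  "alpha_hat H Ms = (\<lambda>(\<zeta>, ap). real (max ap (alpha_real H Ms \<zeta>)))"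

definition alpha_dpfm :: "('k \<Rightarrow> 'x \<Rightarrow> nat) \<Rightarrow> 'x set \<Rightarrow> real \<Rightarrow> real \<Rightarrow> 'k \<times> nat \<Rightarrow> real" where
  "alpha_dpfm H Ms gam eps = (\<lambda>(\<zeta>, ap). real (max (max ap (alpha_real H Ms \<zeta>)) (alpha_min gam eps)))"

definition expect :: "'a measure \<Rightarrow> ('a \<Rightarrow> real) \<Rightarrow> real" where
  "expect M X = integral\<^sup>L M X"

definition var :: "'a measure \<Rightarrow> ('a \<Rightarrow> real) \<Rightarrow> real" where
  "var M X = integral\<^sup>L M (\<lambda>\<omega>. (X \<omega> - expect M X)\<^sup>2)"

end

theory Submission
  imports Defs
begin

text \<open>
  With the constant a = alpha_min we have alpha = max hat_alpha a, so the difference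
  alpha - hat_alpha lies in [0, a] and vanishes outside the event hat_alpha \<le> a. Since
  hat_alpha \<ge> alpha_real, that event has probability at most (1 - (1 - p)^a)^|M| \<rightarrow> 0.
  Hence E[alpha] - E[hat_alpha] \<rightarrow> 0, and, writing 2|uv| \<le> t u^2 + v^2/t, also
  |Var[alpha] - Var[hat_alpha]| \<le> t Var[hat_alpha] + o(1) for every t > 0.
  Both ratios therefore tend to 1 as soon as E[hat_alpha] and Var[hat_alpha] stay away from 0.
  For this pick m with |M| (1 - p)^m close to 1/2: then P(hat_alpha \<le> m) stays between
  1/4 and exp(-(1 - p)/2), and an integer-valued variable whose distribution function at m
  is bounded away from 0 and 1 has mean and variance bounded away from 0.
\<close>

lemma prob_geom1_pmf_atMost:
  assumes "0 < p" "p \<le> 1"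
  shows "measure_pmf.prob (geom1_pmf p) {..m} = 1 - (1 - p) ^ m"
proof -
  have "measure_pmf.prob (geom1_pmf p) {..m} = measure_pmf.prob (geometric_pmf p) {..<m}"
  proof -
    have "Suc -` {..m} = {..<m}" by auto
    then show ?thesis unfolding geom1_pmf_def by (simp add: measure_map_pmf)
  qed
  also have "\<dots> = (\<Sum>k<m. (1 - p) ^ k * p)"
    using assms by (simp add: measure_measure_pmf_finite)
  also have "\<dots> = 1 - (1 - p) ^ m"
    by (induction m) (auto simp: algebra_simps)
  finally show ?thesis .
qed

lemma summable_real_power2_mult_power:
  fixes q :: real
  assumes "0 \<le> q" "q < 1"
  shows "summable (\<lambda>n. real n ^ 2 * q ^ n)"
proof -
  define r where "r = sqrt q"
  have r: "0 \<le> r" "r < 1" "r ^ 2 = q"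
    using assms by (auto simp: r_def)
  have summable: "summable (\<lambda>n. r ^ n * real n)"
    using geometric_sums_times_n[of r] r by (auto simp: sums_iff)
  then obtain B where B: "\<And>n. r ^ n * real n \<le> B"
    using convergent_imp_Bseq[OF convergentI[OF summable_LIMSEQ_zero[OF summable]]]
    by (auto simp: Bseq_def abs_le_iff)
  have "real n ^ 2 * q ^ n = (r ^ n * real n) * (r ^ n * real n)" for n
  proof -
    have "q ^ n = r ^ n * r ^ n"
      by (metis r(3) power2_eq_square power_mult_distrib)
    then show ?thesis
      by (simp add: power2_eq_square)
  qed
  moreover have "(r ^ n * real n) * (r ^ n * real n) \<le> B * (r ^ n * real n)" for n
    using B[of n] r by (intro mult_right_mono) auto
  ultimately show ?thesis
    by (intro summable_comparison_test[OF _ summable_mult[OF summable, of B]]) auto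
qed

lemma integrable_geom1_pmf_power2:
  assumes "0 < p" "p \<le> 1"
  shows "integrable (measure_pmf (geom1_pmf p)) (\<lambda>k. real k ^ 2)"
proof -
  have "summable (\<lambda>n. p * (real n ^ 2 * (1 - p) ^ n))"
    using assms by (intro summable_mult summable_real_power2_mult_power) auto
  then have "integrable (measure_pmf (geometric_pmf p)) (\<lambda>k. real k ^ 2)"
    unfolding measure_pmf_eq_density using assms
    by (subst integrable_density) (auto simp: integrable_count_space_nat_iff mult_ac)
  moreover have "integrable (measure_pmf (geometric_pmf p)) real"
    using assms by (intro integrable_real_geometric_pmf) auto
  ultimately have "integrable (measure_pmf (geometric_pmf p)) (\<lambda>k. real k ^ 2 + 2 * real k + 1)"
    by auto
  then show ?thesis
    unfolding geom1_pmf_def by (simp add: power2_eq_square algebra_simps)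
qed

lemma integrable_Max_power2:
  fixes f :: "'i \<Rightarrow> 'a \<Rightarrow> nat"
  assumes "finite I" "I \<noteq> {}" "\<And>i. i \<in> I \<Longrightarrow> integrable M (\<lambda>x. real (f i x) ^ 2)"
  shows "integrable M (\<lambda>x. real (MAX i\<in>I. f i x) ^ 2)"
proof -
  have mono: "mono (\<lambda>n::nat. real n ^ 2)"
    by (auto intro!: monoI power_mono)
  have "real (MAX i\<in>I. f i x) ^ 2 = (MAX i\<in>I. real (f i x) ^ 2)" for x
    using mono_Max_commute[OF mono, of "(\<lambda>i. f i x) ` I"] assms by (simp add: image_image)
  then show ?thesis
    using assms by (simp add: integrable_MAX)
qed

lemma integrable_alpha_p_pmf_power2:
  assumes "0 < p" "p \<le> 1"
  shows "integrable (measure_pmf (alpha_p_pmf p n)) (\<lambda>a. real a ^ 2)"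
proof (cases "n = 0")
  case True
  \<comment> \<open>the noise is then the point mass at the junk value Max {}\<close>
  then show ?thesis
    by (simp add: alpha_p_pmf_def map_pmf_const integrable_measure_pmf_finite)
next
  case False
  let ?Q = "Pi_pmf {..<n} 0 (\<lambda>_. geom1_pmf p)"
  have "integrable ?Q (\<lambda>f. real (f j) ^ 2)" if "j < n" for j
  proof -
    have "map_pmf (\<lambda>f. f j) ?Q = geom1_pmf p"
      using that by (simp add: Pi_pmf_component)
    then have "integrable (map_pmf (\<lambda>f. f j) ?Q) (\<lambda>k. real k ^ 2)"
      using integrable_geom1_pmf_power2[OF assms] by simp
    then show ?thesis
      by simp
  qed
  then have "integrable ?Q (\<lambda>f. real (MAX j\<in>{..<n}. f j) ^ 2)"
    using False by (intro integrable_Max_power2) auto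
  then show ?thesis
    by (simp add: alpha_p_pmf_def)
qed

lemma abs_power2_add_minus_power2_le:
  fixes u v t :: real
  assumes "0 < t"
  shows "\<bar>(u + v) ^ 2 - u ^ 2\<bar> \<le> t * u ^ 2 + (1 + 1 / t) * v ^ 2"
proof -
  have "0 \<le> (t * \<bar>u\<bar> - \<bar>v\<bar>) ^ 2 / t"
    using assms by simp
  then have "2 * \<bar>u * v\<bar> \<le> t * u ^ 2 + v ^ 2 / t"
    using assms by (simp add: power2_eq_square field_simps abs_mult)
  moreover have "\<bar>(u + v) ^ 2 - u ^ 2\<bar> \<le> 2 * \<bar>u * v\<bar> + v ^ 2"
    by (simp add: power2_eq_square algebra_simps abs_mult abs_triangle_ineq[THEN order_trans])
  ultimately show ?thesis
    by (simp add: algebra_simps)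
qed

lemma integrable_add_power2:
  fixes f g :: "'a \<Rightarrow> real"
  assumes [measurable]: "f \<in> borel_measurable M" "g \<in> borel_measurable M"
    and "integrable M (\<lambda>x. f x ^ 2)" "integrable M (\<lambda>x. g x ^ 2)"
  shows "integrable M (\<lambda>x. (f x + g x) ^ 2)"
proof (rule Bochner_Integration.integrable_bound)
  show "integrable M (\<lambda>x. 2 * f x ^ 2 + 2 * g x ^ 2)"
    using assms by simp
  have "(f x + g x) ^ 2 \<le> 2 * f x ^ 2 + 2 * g x ^ 2" for x
    using zero_le_power2[of "f x - g x"] by (simp add: power2_eq_square algebra_simps)
  then show "AE x in M. norm ((f x + g x) ^ 2) \<le> norm (2 * f x ^ 2 + 2 * g x ^ 2)"
    by simp
qed simp

context prob_space
begin

lemma integrable_minus_const_power2: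
  fixes f :: "'a \<Rightarrow> real"
  assumes [measurable]: "f \<in> borel_measurable M" and "integrable M (\<lambda>x. f x ^ 2)"
  shows "integrable M (\<lambda>x. (f x - c) ^ 2)"
  using integrable_add_power2[of f M "\<lambda>_. - c"] assms by simp

lemma var_ge_min_prob_atMost:
  fixes X :: "'a \<Rightarrow> real"
  assumes [measurable]: "X \<in> borel_measurable M" and "integrable M (\<lambda>x. X x ^ 2)"
  shows "min (prob {x\<in>space M. X x \<le> m}) (prob {x\<in>space M. m + 1 \<le> X x}) \<le> 4 * var M X"
proof -
  let ?\<mu> = "expectation X"
  have "min (prob {x\<in>space M. X x \<le> m}) (prob {x\<in>space M. m + 1 \<le> X x})
      \<le> prob {x\<in>space M. 1 / 2 \<le> \<bar>X x - ?\<mu>\<bar>}"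
  proof (cases "?\<mu> \<le> m + 1 / 2")
    case True
    then have "prob {x\<in>space M. m + 1 \<le> X x} \<le> prob {x\<in>space M. 1 / 2 \<le> \<bar>X x - ?\<mu>\<bar>}"
      by (intro finite_measure_mono) auto
    then show ?thesis by linarith
  next
    case False
    then have "prob {x\<in>space M. X x \<le> m} \<le> prob {x\<in>space M. 1 / 2 \<le> \<bar>X x - ?\<mu>\<bar>}"
      by (intro finite_measure_mono) auto
    then show ?thesis by linarith
  qed
  also have "\<dots> \<le> variance X / (1 / 2) ^ 2"
    using assms by (intro Chebyshev_inequality) auto
  finally show ?thesis
    by (simp add: var_def expect_def field_simps)
qed

lemma expect_var_ge_of_prob_atMost:
  fixes X :: "'a \<Rightarrow> real" and m :: nat
  assumes [measurable]: "X \<in> borel_measurable M" and "integrable M (\<lambda>x. X x ^ 2)"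
    and "\<And>x. X x \<in> \<nat>"
    and "\<delta> \<le> prob {x\<in>space M. X x \<le> m}" "prob {x\<in>space M. X x \<le> m} \<le> 1 - \<delta>"
  shows "\<delta> \<le> expect M X \<and> \<delta> / 4 \<le> var M X"
proof -
  have nat_valued: "\<exists>n. X x = real n" for x
    using assms(3)[of x] by (metis Nats_cases)
  then have nonneg: "0 \<le> X x" for x
    by (metis of_nat_0_le_iff)
  have "real m + 1 \<le> X x \<longleftrightarrow> \<not> X x \<le> m" for x
  proof -
    obtain n where "X x = real n" using nat_valued by blast
    then show ?thesis using of_nat_le_iff[of "Suc m" n] by auto
  qed
  then have "{x\<in>space M. real m + 1 \<le> X x} = space M - {x\<in>space M. X x \<le> m}"
    by auto
  then have upper: "prob {x\<in>space M. real m + 1 \<le> X x} = 1 - prob {x\<in>space M. X x \<le> m}"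
    by (simp add: prob_compl)
  have "integrable M X"
    using assms(1,2) by (rule square_integrable_imp_integrable)
  then have "prob {x\<in>space M. real m + 1 \<le> X x} \<le> expect M X / (real m + 1)"
    unfolding expect_def using nonneg
    by (intro integral_Markov_inequality_measure[where A = "space M"]) auto
  also have "\<dots> \<le> expect M X / 1"
    using nonneg by (intro divide_left_mono) (auto simp: expect_def)
  finally have "\<delta> \<le> expect M X"
    using assms(5) upper by linarith
  moreover have "\<delta> \<le> 4 * var M X"
    using var_ge_min_prob_atMost[OF assms(1,2), of "real m"] assms(4,5) upper by linarith
  ultimately show ?thesis
    by simp
qed

lemma expect_max_const_diff_power_le:
  fixes X :: "'a \<Rightarrow> real"
  assumes [measurable]: "X \<in> borel_measurable M"
    and "\<And>x. 0 \<le> X x" "0 \<le> a" "0 < n"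
  shows "expect M (\<lambda>x. (max (X x) a - X x) ^ n) \<le> a ^ n * prob {x\<in>space M. X x \<le> a}"
proof -
  let ?S = "{x\<in>space M. X x \<le> a}"
  have bound: "(max (X x) a - X x) ^ n \<le> a ^ n * indicator ?S x" if "x \<in> space M" for x
    using that assms(2-4) by (auto simp: indicator_def max_def zero_power intro!: power_mono)
  have "\<bar>max (X x) a - X x\<bar> ^ n \<le> a ^ n" for x
    using assms(2,3) by (intro power_mono) (auto simp: max_def)
  then have "integrable M (\<lambda>x. (max (X x) a - X x) ^ n)"
    by (intro integrable_const_bound[where B = "a ^ n"]) (auto simp: power_abs)
  then have "expect M (\<lambda>x. (max (X x) a - X x) ^ n) \<le> (\<integral>x. a ^ n * indicator ?S x \<partial>M)"
    unfolding expect_def using bound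
    by (intro integral_mono integrable_mult_right integrable_real_indicator) (auto simp: less_top[symmetric])
  then show ?thesis
    by simp
qed

lemma abs_var_add_le:
  fixes X D :: "'a \<Rightarrow> real"
  assumes [measurable]: "X \<in> borel_measurable M" "D \<in> borel_measurable M"
    and "integrable M (\<lambda>x. X x ^ 2)" "integrable M (\<lambda>x. D x ^ 2)" and "0 < t"
  shows "\<bar>var M (\<lambda>x. X x + D x) - var M X\<bar> \<le> t * var M X + (1 + 1 / t) * expect M (\<lambda>x. D x ^ 2)"
proof -
  let ?Xc = "\<lambda>x. X x - expectation X" and ?Dc = "\<lambda>x. D x - expectation D"
  have int: "integrable M X" "integrable M D"
    using assms by (auto intro: square_integrable_imp_integrable)
  have int_c: "integrable M (\<lambda>x. ?Xc x ^ 2)" "integrable M (\<lambda>x. ?Dc x ^ 2)"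
    using assms by (auto intro: integrable_minus_const_power2)
  have int_sum: "integrable M (\<lambda>x. (?Xc x + ?Dc x) ^ 2)"
    using int_c by (intro integrable_add_power2) auto
  have var_sum: "var M (\<lambda>x. X x + D x) = expectation (\<lambda>x. (?Xc x + ?Dc x) ^ 2)"
    using int by (simp add: var_def expect_def algebra_simps)
  have var_X: "var M X = expectation (\<lambda>x. ?Xc x ^ 2)"
    by (simp add: var_def expect_def)
  have var_D: "variance D \<le> expectation (\<lambda>x. D x ^ 2)"
    using int assms(4) by (simp add: variance_eq)
  have "\<bar>var M (\<lambda>x. X x + D x) - var M X\<bar> = \<bar>expectation (\<lambda>x. (?Xc x + ?Dc x) ^ 2 - ?Xc x ^ 2)\<bar>"
    unfolding var_sum var_X using int_sum int_c by simp
  also have "\<dots> \<le> expectation (\<lambda>x. \<bar>(?Xc x + ?Dc x) ^ 2 - ?Xc x ^ 2\<bar>)"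
    by (rule integral_abs_bound)
  also have "\<dots> \<le> expectation (\<lambda>x. t * ?Xc x ^ 2 + (1 + 1 / t) * ?Dc x ^ 2)"
    using int_sum int_c assms(5) by (intro integral_mono abs_power2_add_minus_power2_le) auto
  also have "\<dots> = t * var M X + (1 + 1 / t) * variance D"
    unfolding var_X using int_c by simp
  also have "\<dots> \<le> t * var M X + (1 + 1 / t) * expect M (\<lambda>x. D x ^ 2)"
    using var_D assms(5) by (intro add_left_mono mult_left_mono) (auto simp: expect_def)
  finally show ?thesis .
qed

lemma tendsto_expect_max_const_ratio:
  fixes A :: "nat \<Rightarrow> 'a \<Rightarrow> real"
  assumes [measurable]: "\<And>k. A k \<in> borel_measurable M"
    and "\<And>k. integrable M (A k)" "\<And>k x. 0 \<le> A k x" "0 \<le> a"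
    and tail: "(\<lambda>k. prob {x\<in>space M. A k x \<le> a}) \<longlonglongrightarrow> 0"
    and "0 < c" "eventually (\<lambda>k. c \<le> expect M (A k)) sequentially"
  shows "(\<lambda>k. expect M (\<lambda>x. max (A k x) a) / expect M (A k)) \<longlonglongrightarrow> 1"
proof -
  let ?P = "\<lambda>k. prob {x\<in>space M. A k x \<le> a}"
  let ?D = "\<lambda>k x. max (A k x) a - A k x"
  have expect_max: "expect M (\<lambda>x. max (A k x) a) = expect M (A k) + expect M (?D k)" for k
    using assms(2) by (simp add: expect_def integrable_max)
  have D_nonneg: "0 \<le> expect M (?D k)" for k
    by (simp add: expect_def)
  have D_le: "expect M (?D k) \<le> a * ?P k" for k
    using expect_max_const_diff_power_le[of "A k" a 1] assms(3,4) by simp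
  have "eventually (\<lambda>k. norm (expect M (\<lambda>x. max (A k x) a) / expect M (A k) - 1)
      \<le> a / c * ?P k) sequentially"
    using assms(7)
  proof eventually_elim
    case (elim k)
    then have "0 < expect M (A k)"
      using \<open>0 < c\<close> by linarith
    then have "norm (expect M (\<lambda>x. max (A k x) a) / expect M (A k) - 1) = expect M (?D k) / expect M (A k)"
      using D_nonneg[of k] by (simp add: expect_max field_simps)
    also have "\<dots> \<le> a * ?P k / c"
      using elim D_nonneg[of k] D_le[of k] \<open>0 < c\<close> by (intro frac_le) auto
    finally show ?case
      by simp
  qed
  moreover have "(\<lambda>k. a / c * ?P k) \<longlonglongrightarrow> 0"
    by (rule tendsto_mult_right_zero[OF tail])
  ultimately have "(\<lambda>k. expect M (\<lambda>x. max (A k x) a) / expect M (A k) - 1) \<longlonglongrightarrow> 0"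
    by (rule Lim_null_comparison)
  then show ?thesis
    by (simp add: LIM_zero_iff)
qed

lemma tendsto_var_max_const_ratio:
  fixes A :: "nat \<Rightarrow> 'a \<Rightarrow> real"
  assumes [measurable]: "\<And>k. A k \<in> borel_measurable M"
    and "\<And>k. integrable M (\<lambda>x. A k x ^ 2)" "\<And>k x. 0 \<le> A k x" "0 \<le> a"
    and tail: "(\<lambda>k. prob {x\<in>space M. A k x \<le> a}) \<longlonglongrightarrow> 0"
    and "0 < c" "eventually (\<lambda>k. c \<le> var M (A k)) sequentially"
  shows "(\<lambda>k. var M (\<lambda>x. max (A k x) a) / var M (A k)) \<longlonglongrightarrow> 1"
proof (rule tendstoI)
  fix e :: real
  assume "0 < e"
  define t where "t = e / 2"
  have "0 < t"
    using \<open>0 < e\<close> by (simp add: t_def)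
  let ?P = "\<lambda>k. prob {x\<in>space M. A k x \<le> a}"
  let ?D = "\<lambda>k x. max (A k x) a - A k x"
  have bound: "dist (var M (\<lambda>x. max (A k x) a) / var M (A k)) 1 \<le> t + (1 + 1 / t) * a ^ 2 / c * ?P k"
    if "c \<le> var M (A k)" for k
  proof -
    have pos: "0 < var M (A k)"
      using that \<open>0 < c\<close> by linarith
    have "?D k x ^ 2 \<le> a ^ 2" for x
      using assms(3,4) by (intro power_mono) (auto simp: max_def)
    then have "integrable M (\<lambda>x. ?D k x ^ 2)"
      by (intro integrable_const_bound[where B = "a ^ 2"]) auto
    then have "\<bar>var M (\<lambda>x. A k x + ?D k x) - var M (A k)\<bar>
        \<le> t * var M (A k) + (1 + 1 / t) * expect M (\<lambda>x. ?D k x ^ 2)"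
      using assms(2) \<open>0 < t\<close> by (intro abs_var_add_le) auto
    also have "\<dots> \<le> t * var M (A k) + (1 + 1 / t) * (a ^ 2 * ?P k)"
      using expect_max_const_diff_power_le[of "A k" a 2] assms(3,4) \<open>0 < t\<close>
      by (intro add_left_mono mult_left_mono) auto
    finally have "\<bar>var M (\<lambda>x. max (A k x) a) - var M (A k)\<bar>
        \<le> t * var M (A k) + (1 + 1 / t) * (a ^ 2 * ?P k)"
      by simp
    then have "\<bar>var M (\<lambda>x. max (A k x) a) - var M (A k)\<bar> / var M (A k)
        \<le> (t * var M (A k) + (1 + 1 / t) * (a ^ 2 * ?P k)) / var M (A k)"
      using pos by (intro divide_right_mono) auto
    then have "\<bar>var M (\<lambda>x. max (A k x) a) / var M (A k) - 1\<bar>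
        \<le> (t * var M (A k) + (1 + 1 / t) * (a ^ 2 * ?P k)) / var M (A k)"
      using pos by (simp add: field_simps)
    also have "\<dots> \<le> t + (1 + 1 / t) * (a ^ 2 * ?P k) / c"
      using pos that \<open>0 < c\<close> \<open>0 < t\<close> by (simp add: add_divide_distrib frac_le)
    finally show ?thesis
      by (simp add: dist_real_def)
  qed
  have "(\<lambda>k. (1 + 1 / t) * a ^ 2 / c * ?P k) \<longlonglongrightarrow> 0"
    by (rule tendsto_mult_right_zero[OF tail])
  then have "eventually (\<lambda>k. (1 + 1 / t) * a ^ 2 / c * ?P k < t) sequentially"
    using \<open>0 < t\<close> by (rule order_tendstoD)
  then show "eventually (\<lambda>k. dist (var M (\<lambda>x. max (A k x) a) / var M (A k)) 1 < e) sequentially"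
    using assms(7)
  proof eventually_elim
    case (elim k)
    then show ?case
      using bound[OF elim(2)] elim(1) t_def by linarith
  qed
qed

end

lemma geometric_max_cdf_level:
  fixes q :: real and n m0 :: nat
  assumes q: "0 < q" "q < 1" and large: "1 < 2 * real n * q ^ m0"
  obtains m where "m0 \<le> m" "1 / 2 \<le> (1 - q ^ m) ^ n" "(1 - q ^ m) ^ n \<le> exp (- q / 2)"
proof -
  let ?small = "\<lambda>m. 2 * real n * q ^ m \<le> 1"
  define m where "m = (LEAST m. ?small m)"
  have "0 < n"
    using large q by (cases n) (auto simp: power_le_one mult_le_one)
  then obtain m' where "q ^ m' < 1 / (2 * real n)"
    using real_arch_pow_inv[of "1 / (2 * real n)" q] q by auto
  then have "?small m'"
    using \<open>0 < n\<close> by (simp add: field_simps)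
  then have small: "?small m"
    unfolding m_def by (rule LeastI)
  have "m0 < m"
  proof (rule ccontr)
    assume "\<not> m0 < m"
    then have "q ^ m0 \<le> q ^ m"
      using q by (intro power_decreasing) auto
    then have "2 * real n * q ^ m0 \<le> 2 * real n * q ^ m"
      by (intro mult_left_mono) auto
    then show False
      using small large by linarith
  qed
  then have "\<not> ?small (m - 1)"
    unfolding m_def by (intro not_less_Least) (auto simp: m_def[symmetric])
  moreover have "q ^ m = q * q ^ (m - 1)"
    using \<open>m0 < m\<close> by (simp flip: power_Suc)
  ultimately have half: "q / 2 < real n * q ^ m"
    using q by (simp add: algebra_simps)
  have q_m: "0 \<le> q ^ m" "q ^ m \<le> 1"
    using q by (auto simp: power_le_one)
  have "1 + real n * (- (q ^ m)) \<le> (1 + (- (q ^ m))) ^ n"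
    using q_m by (intro Bernoulli_inequality) auto
  then have lower: "1 / 2 \<le> (1 - q ^ m) ^ n"
    using small by simp
  have "(1 - q ^ m) ^ n \<le> exp (- (q ^ m)) ^ n"
    using q_m by (intro power_mono exp_minus_ge) auto
  also have "\<dots> \<le> exp (- q / 2)"
    using half by (simp flip: exp_of_nat_mult)
  finally show ?thesis
    using that[of m] lower \<open>m0 < m\<close> by simp
qed

context pair_prob_space
begin

lemma distr_pair_snd: "distr (M1 \<Otimes>\<^sub>M M2) M2 snd = M2"
proof (rule measure_eqI)
  fix A
  assume A: "A \<in> sets (distr (M1 \<Otimes>\<^sub>M M2) M2 snd)"
  then have "emeasure (distr (M1 \<Otimes>\<^sub>M M2) M2 snd) A = emeasure (M1 \<Otimes>\<^sub>M M2) (space M1 \<times> A)"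
    by (auto simp: emeasure_distr space_pair_measure dest: sets.sets_into_space
        intro!: arg_cong2[where f = emeasure])
  with A show "emeasure (distr (M1 \<Otimes>\<^sub>M M2) M2 snd) A = emeasure M2 A"
    by (simp add: M2.emeasure_pair_measure_Times M1.emeasure_space_1)
qed simp

lemma integrable_comp_fst:
  fixes f :: "'a \<Rightarrow> real"
  assumes "integrable M1 f"
  shows "integrable (M1 \<Otimes>\<^sub>M M2) (\<lambda>\<omega>. f (fst \<omega>))"
  using assms by (simp add: M2.distr_pair_fst flip: integrable_distr_eq[OF measurable_fst])

lemma integrable_comp_snd:
  fixes f :: "'b \<Rightarrow> real"
  assumes "integrable M2 f"
  shows "integrable (M1 \<Otimes>\<^sub>M M2) (\<lambda>\<omega>. f (snd \<omega>))"
  using assms by (simp add: distr_pair_snd flip: integrable_distr_eq[OF measurable_snd])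

lemma measure_Times:
  assumes "A \<in> sets M1" "B \<in> sets M2"
  shows "measure (M1 \<Otimes>\<^sub>M M2) (A \<times> B) = measure M1 A * measure M2 B"
  using assms by (simp add: measure_def M2.emeasure_pair_measure_Times enn2real_mult)

end

lemma of_nat_alpha_real:
  assumes "finite M" "M \<noteq> {}"
  shows "real (alpha_real H M \<zeta>) = (MAX x\<in>M. real (H \<zeta> x))"
  using assms unfolding alpha_real_def
  by (subst mono_Max_commute[where f = real]) (auto simp: mono_def image_image)

locale geometric_hash = K: prob_space K for K :: "'k measure" +
  fixes H :: "'k \<Rightarrow> 'x \<Rightarrow> nat" and p :: real
  assumes p: "0 < p" "p < 1"
    and indep_hash: "K.indep_vars (\<lambda>_. count_space UNIV) (\<lambda>x \<zeta>. H \<zeta> x) UNIV"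
    and distr_hash: "\<And>x. distr K (count_space UNIV) (\<lambda>\<zeta>. H \<zeta> x) = measure_pmf (geom1_pmf p)"
begin

lemma measurable_hash [measurable]: "(\<lambda>\<zeta>. H \<zeta> x) \<in> K \<rightarrow>\<^sub>M count_space UNIV"
  using indep_hash unfolding K.indep_vars_def2 by auto

lemma prob_hash_atMost: "K.prob {\<zeta>\<in>space K. H \<zeta> x \<le> m} = 1 - (1 - p) ^ m"
proof -
  have "K.prob {\<zeta>\<in>space K. H \<zeta> x \<le> m} = measure (distr K (count_space UNIV) (\<lambda>\<zeta>. H \<zeta> x)) {..m}"
    by (subst measure_distr) (auto simp: vimage_def Int_def conj_commute)
  then show ?thesis
    using prob_geom1_pmf_atMost[of p m] p by (simp add: distr_hash)
qed

lemma integrable_hash_power2: "integrable K (\<lambda>\<zeta>. real (H \<zeta> x) ^ 2)"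
proof -
  have "integrable (distr K (count_space UNIV) (\<lambda>\<zeta>. H \<zeta> x)) (\<lambda>k. real k ^ 2)"
    using integrable_geom1_pmf_power2[of p] p by (simp add: distr_hash)
  then show ?thesis
    by (subst (asm) integrable_distr_eq) auto
qed

lemma borel_measurable_alpha_real [measurable]:
  assumes "finite M"
  shows "(\<lambda>\<zeta>. real (alpha_real H M \<zeta>)) \<in> borel_measurable K"
proof (cases "M = {}")
  case False
  then show ?thesis
    using assms by (simp add: of_nat_alpha_real)
qed (simp add: alpha_real_def)

lemma integrable_alpha_real_power2:
  assumes "finite M"
  shows "integrable K (\<lambda>\<zeta>. real (alpha_real H M \<zeta>) ^ 2)"
proof (cases "M = {}")
  case False
  then show ?thesis
    unfolding alpha_real_def using assms integrable_hash_power2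
    by (intro integrable_Max_power2[where f = "\<lambda>x \<zeta>. H \<zeta> x"]) auto
qed (simp add: alpha_real_def)

lemma prob_alpha_real_atMost:
  assumes "finite M" "M \<noteq> {}"
  shows "K.prob {\<zeta>\<in>space K. alpha_real H M \<zeta> \<le> m} = (1 - (1 - p) ^ m) ^ card M"
proof -
  have "{\<zeta>\<in>space K. alpha_real H M \<zeta> \<le> m} = (\<Inter>x\<in>M. (\<lambda>\<zeta>. H \<zeta> x) -` {..m} \<inter> space K)"
    using assms by (auto simp: alpha_real_def)
  also have "K.prob \<dots> = (\<Prod>x\<in>M. K.prob ((\<lambda>\<zeta>. H \<zeta> x) -` {..m} \<inter> space K))"
    using assms by (intro K.indep_varsD[OF indep_hash]) auto
  also have "\<dots> = (\<Prod>x\<in>M. 1 - (1 - p) ^ m)"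
    using prob_hash_atMost by (simp add: vimage_def Int_def conj_commute)
  finally show ?thesis
    by simp
qed

end

locale geometric_hash_noise = geometric_hash K H p for K :: "'k measure" and H p +
  fixes N :: "nat pmf"
  assumes integrable_noise_power2: "integrable (measure_pmf N) (\<lambda>a. real a ^ 2)"
begin

sublocale \<Omega>: pair_prob_space K "measure_pmf N"
  by unfold_locales

lemma alpha_hat_eq: "alpha_hat H M = (\<lambda>\<omega>. max (real (snd \<omega>)) (real (alpha_real H M (fst \<omega>))))"
  by (auto simp: alpha_hat_def of_nat_max)

lemma borel_measurable_alpha_hat [measurable]:
  assumes "finite M"
  shows "alpha_hat H M \<in> borel_measurable (K \<Otimes>\<^sub>M measure_pmf N)"
  using assms unfolding alpha_hat_eq by measurable

lemma integrable_alpha_hat_power2: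
  assumes "finite M"
  shows "integrable (K \<Otimes>\<^sub>M measure_pmf N) (\<lambda>\<omega>. alpha_hat H M \<omega> ^ 2)"
proof (rule Bochner_Integration.integrable_bound)
  show "integrable (K \<Otimes>\<^sub>M measure_pmf N) (\<lambda>\<omega>. real (snd \<omega>) ^ 2 + real (alpha_real H M (fst \<omega>)) ^ 2)"
    using assms integrable_noise_power2 integrable_alpha_real_power2
    by (intro Bochner_Integration.integrable_add \<Omega>.integrable_comp_fst \<Omega>.integrable_comp_snd)
  show "AE \<omega> in K \<Otimes>\<^sub>M measure_pmf N. norm (alpha_hat H M \<omega> ^ 2)
      \<le> norm (real (snd \<omega>) ^ 2 + real (alpha_real H M (fst \<omega>)) ^ 2)"
    by (auto simp: alpha_hat_eq max_def)
qed (use assms in measurable)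

lemma prob_alpha_hat_atMost:
  assumes "finite M" "M \<noteq> {}"
  shows "\<Omega>.prob {\<omega>\<in>space (K \<Otimes>\<^sub>M measure_pmf N). alpha_hat H M \<omega> \<le> real m}
    = (1 - (1 - p) ^ m) ^ card M * measure_pmf.prob N {..m}"
proof -
  have "{\<omega>\<in>space (K \<Otimes>\<^sub>M measure_pmf N). alpha_hat H M \<omega> \<le> real m}
      = {\<zeta>\<in>space K. real (alpha_real H M \<zeta>) \<le> real m} \<times> {..m}"
    by (auto simp: alpha_hat_eq space_pair_measure)
  moreover have "{\<zeta>\<in>space K. real (alpha_real H M \<zeta>) \<le> real m} \<in> sets K"
    using assms(1) by measurable
  ultimately show ?thesis
    using prob_alpha_real_atMost[OF assms] by (simp add: \<Omega>.measure_Times)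
qed


lemma tendsto_prob_alpha_hat_atMost:
  assumes "\<And>k. finite (Ms k)" and "filterlim (\<lambda>k. card (Ms k)) at_top sequentially"
  shows "(\<lambda>k. \<Omega>.prob {\<omega>\<in>space (K \<Otimes>\<^sub>M measure_pmf N). alpha_hat H (Ms k) \<omega> \<le> real a}) \<longlonglongrightarrow> 0"
proof (rule Lim_null_comparison)
  let ?r = "1 - (1 - p) ^ a"
  have r: "0 \<le> ?r" "?r < 1"
    using p by (auto simp: power_le_one)
  have "eventually (\<lambda>k. 1 \<le> card (Ms k)) sequentially"
    using assms(2) by (simp add: filterlim_at_top)
  then show "eventually (\<lambda>k. norm (\<Omega>.prob {\<omega>\<in>space (K \<Otimes>\<^sub>M measure_pmf N). alpha_hat H (Ms k) \<omega> \<le> real a})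
      \<le> ?r ^ card (Ms k)) sequentially"
  proof eventually_elim
    case (elim k)
    then have "Ms k \<noteq> {}"
      by auto
    then show ?case
      using r measure_pmf.prob_le_1[of N "{..a}"]
      by (simp add: prob_alpha_hat_atMost assms(1) mult_left_le)
  qed
  show "(\<lambda>k. ?r ^ card (Ms k)) \<longlonglongrightarrow> 0"
    using r by (intro filterlim_compose[OF LIMSEQ_power_zero assms(2)]) auto
qed

lemma eventually_expect_var_alpha_hat_ge:
  assumes "\<And>k. finite (Ms k)" and "filterlim (\<lambda>k. card (Ms k)) at_top sequentially"
  obtains c where "0 < c"
    "eventually (\<lambda>k. c \<le> expect (K \<Otimes>\<^sub>M measure_pmf N) (alpha_hat H (Ms k))
                   \<and> c \<le> var (K \<Otimes>\<^sub>M measure_pmf N) (alpha_hat H (Ms k))) sequentially"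
proof
  define q where "q = 1 - p"
  have q: "0 < q" "q < 1"
    using p by (auto simp: q_def)
  define \<delta> where "\<delta> = min (1 / 4) (1 - exp (- q / 2))"
  show "0 < \<delta> / 4"
    using q by (simp add: \<delta>_def)
  have "(\<lambda>m. measure_pmf.prob N {..m}) \<longlonglongrightarrow> measure_pmf.prob N (\<Union>m. {..m})"
    by (rule measure_pmf.finite_Lim_measure_incseq) (auto simp: incseq_def)
  then have "eventually (\<lambda>m. 1 / 2 < measure_pmf.prob N {..m}) sequentially"
    by (rule order_tendstoD) (simp add: UN_atMost_UNIV)
  then obtain m0 where m0: "\<And>m. m0 \<le> m \<Longrightarrow> 1 / 2 < measure_pmf.prob N {..m}"
    by (auto simp: eventually_sequentially)
  have "filterlim (\<lambda>k. real (card (Ms k))) at_top sequentially"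
    by (rule filterlim_compose[OF filterlim_real_sequentially assms(2)])
  then have "eventually (\<lambda>k. 1 / (2 * q ^ m0) < real (card (Ms k))) sequentially"
    by (simp add: filterlim_at_top_dense)
  then show "eventually (\<lambda>k. \<delta> / 4 \<le> expect (K \<Otimes>\<^sub>M measure_pmf N) (alpha_hat H (Ms k))
      \<and> \<delta> / 4 \<le> var (K \<Otimes>\<^sub>M measure_pmf N) (alpha_hat H (Ms k))) sequentially"
  proof eventually_elim
    case (elim k)
    then have "1 < 2 * real (card (Ms k)) * q ^ m0"
      using q by (simp add: field_simps)
    then obtain m where "m0 \<le> m" and level: "1 / 2 \<le> (1 - q ^ m) ^ card (Ms k)"
        "(1 - q ^ m) ^ card (Ms k) \<le> exp (- q / 2)"
      by (rule geometric_max_cdf_level[OF q])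
    have "Ms k \<noteq> {}"
      using elim q by (auto simp: field_simps)
    then have prob: "\<Omega>.prob {\<omega>\<in>space (K \<Otimes>\<^sub>M measure_pmf N). alpha_hat H (Ms k) \<omega> \<le> real m}
        = (1 - q ^ m) ^ card (Ms k) * measure_pmf.prob N {..m}"
      by (simp add: prob_alpha_hat_atMost assms(1) q_def)
    have "1 / 2 * (1 / 2) \<le> (1 - q ^ m) ^ card (Ms k) * measure_pmf.prob N {..m}"
      using level m0[OF \<open>m0 \<le> m\<close>] by (intro mult_mono) auto
    moreover have "(1 - q ^ m) ^ card (Ms k) * measure_pmf.prob N {..m} \<le> exp (- q / 2) * 1"
      using level q by (intro mult_mono) (auto simp: measure_pmf.prob_le_1 power_le_one)
    ultimately have "\<delta> \<le> \<Omega>.prob {\<omega>\<in>space (K \<Otimes>\<^sub>M measure_pmf N). alpha_hat H (Ms k) \<omega> \<le> real m}"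
        "\<Omega>.prob {\<omega>\<in>space (K \<Otimes>\<^sub>M measure_pmf N). alpha_hat H (Ms k) \<omega> \<le> real m} \<le> 1 - \<delta>"
      unfolding prob \<delta>_def by auto
    then have "\<delta> \<le> expect (K \<Otimes>\<^sub>M measure_pmf N) (alpha_hat H (Ms k))
        \<and> \<delta> / 4 \<le> var (K \<Otimes>\<^sub>M measure_pmf N) (alpha_hat H (Ms k))"
      using assms(1)
      by (intro \<Omega>.expect_var_ge_of_prob_atMost borel_measurable_alpha_hat integrable_alpha_hat_power2)
        (auto simp: alpha_hat_def case_prod_beta)
    then show ?case
      using \<open>0 < \<delta> / 4\<close> by linarith
  qed
qed

lemma tendsto_expect_var_max_alpha_hat_ratio:
  assumes "\<And>k. finite (Ms k)" and "filterlim (\<lambda>k. card (Ms k)) at_top sequentially"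
  shows "(\<lambda>k. expect (K \<Otimes>\<^sub>M measure_pmf N) (\<lambda>\<omega>. max (alpha_hat H (Ms k) \<omega>) (real a))
                / expect (K \<Otimes>\<^sub>M measure_pmf N) (alpha_hat H (Ms k))) \<longlonglongrightarrow> 1" (is ?expect)
    and "(\<lambda>k. var (K \<Otimes>\<^sub>M measure_pmf N) (\<lambda>\<omega>. max (alpha_hat H (Ms k) \<omega>) (real a))
                / var (K \<Otimes>\<^sub>M measure_pmf N) (alpha_hat H (Ms k))) \<longlonglongrightarrow> 1" (is ?var)
proof -
  have meas: "alpha_hat H (Ms k) \<in> borel_measurable (K \<Otimes>\<^sub>M measure_pmf N)" for k
    using assms(1) by (rule borel_measurable_alpha_hat)
  have power2: "integrable (K \<Otimes>\<^sub>M measure_pmf N) (\<lambda>\<omega>. alpha_hat H (Ms k) \<omega> ^ 2)" for k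
    using assms(1) by (rule integrable_alpha_hat_power2)
  have nonneg: "0 \<le> alpha_hat H (Ms k) \<omega>" for k \<omega>
    by (simp add: alpha_hat_def case_prod_beta)
  note tail = tendsto_prob_alpha_hat_atMost[OF assms, of a]
  obtain c where "0 < c"
    and lower: "eventually (\<lambda>k. c \<le> expect (K \<Otimes>\<^sub>M measure_pmf N) (alpha_hat H (Ms k))) sequentially"
      "eventually (\<lambda>k. c \<le> var (K \<Otimes>\<^sub>M measure_pmf N) (alpha_hat H (Ms k))) sequentially"
    using assms eventually_expect_var_alpha_hat_ge unfolding eventually_conj_iff by blast
  show ?expect
    using \<Omega>.square_integrable_imp_integrable[OF meas power2]
    by (rule \<Omega>.tendsto_expect_max_const_ratio[OF meas _ nonneg _ tail \<open>0 < c\<close> lower(1)]) simp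
  show ?var
    by (rule \<Omega>.tendsto_var_max_const_ratio[OF meas power2 nonneg _ tail \<open>0 < c\<close> lower(2)]) simp
qed

end

theorem lemma4p5:
  fixes K :: "'k measure" and H :: "'k \<Rightarrow> 'x \<Rightarrow> nat"
    and gam eps :: real and Ms :: "nat \<Rightarrow> 'x set"
  assumes "prob_space K"
    and "gam > 0" and "eps > 0"
    and "prob_space.indep_vars K (\<lambda>_. count_space UNIV) (\<lambda>x \<zeta>. H \<zeta> x) UNIV"
    and "\<forall>x. distr K (count_space UNIV) (\<lambda>\<zeta>. H \<zeta> x) = measure_pmf (geom1_pmf (gam / (1 + gam)))"
    and "\<forall>k. finite (Ms k)"
    and "filterlim (\<lambda>k. card (Ms k)) at_top sequentially"
  shows "((\<lambda>k. expect (dpfm_space K gam eps) (alpha_dpfm H (Ms k) gam eps)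
              / expect (dpfm_space K gam eps) (alpha_hat H (Ms k))) \<longlonglongrightarrow> 1)
       \<and> ((\<lambda>k. var (dpfm_space K gam eps) (alpha_dpfm H (Ms k) gam eps)
              / var (dpfm_space K gam eps) (alpha_hat H (Ms k))) \<longlonglongrightarrow> 1)"
proof -
  define p where "p = gam / (1 + gam)"
  have "0 < p" "p < 1"
    using assms(2) by (auto simp: p_def field_simps)
  interpret geometric_hash_noise K H p "alpha_p_pmf p (n_p eps)"
    using assms \<open>0 < p\<close> \<open>p < 1\<close>
    by (intro geometric_hash_noise.intro geometric_hash.intro geometric_hash_axioms.intro
        geometric_hash_noise_axioms.intro integrable_alpha_p_pmf_power2) (auto simp: p_def)
  have space: "dpfm_space K gam eps = K \<Otimes>\<^sub>M measure_pmf (alpha_p_pmf p (n_p eps))"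
    by (simp add: dpfm_space_def p_def)
  have alpha_dpfm: "alpha_dpfm H (Ms k) gam eps
      = (\<lambda>\<omega>. max (alpha_hat H (Ms k) \<omega>) (real (alpha_min gam eps)))" for k
    by (auto simp: alpha_dpfm_def alpha_hat_def of_nat_max)
  show ?thesis
    unfolding space alpha_dpfm using assms(6,7)
    by (auto intro: tendsto_expect_var_max_alpha_hat_ratio)
qed

end
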